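(* Let $\mathcal{H}$ be the Hilbert matrix operator on the Korenblum space $H^\infty_\alpha$. If $0<\alpha\le 2/3$, then $$\|\mathcal{H}\|_{H^\infty_\alpha\to H^\infty_\alpha}=\frac{\pi}{\sin(\alpha\pi)}.$$ If $2/3<\alpha<1$, then $$\|\mathcal{H}\|_{H^\infty_\alpha\to H^\infty_\alpha}\le \int_0^{\frac{3\alpha-2}{4\alpha-2}} G_t(x_0(t))\,dt+\int_{\frac{3\alpha-2}{4\alpha-2}}^1 t^{\alpha-1}(1-t)^{-\alpha}\,dt,$$ where, for $0<t<1$, $$G_t(x)=(1-x)^{2\alpha-1}\left(\frac{1-\left|\frac{x}{1-t}\right|^2}{(1-x)^2-t^2}\right)^{\alpha},\qquad x_0(t)=\frac{\alpha+2\alpha t-t-\sqrt{4\alpha^2t-2\alpha t+\alpha^2-2\alpha+1}}{2\alpha-1}.$$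
   Context: $\mathbb D=\{z\in\mathbb C:|z|<1\}$. For $0<\alpha<1$, the Korenblum space is $H^\infty_\alpha=\{f \text{ analytic on } \mathbb D: \|f\|_{H^\infty_\alpha}=\sup_{z\in\mathbb D}(1-|z|^2)^\alpha|f(z)|<\infty\}$. The Hilbert matrix operator acts on $f(z)=\sum_{k\ge0}a_kz^k$ by $\mathcal{H}(f)(z)=\sum_{n\ge0}\big(\sum_{k\ge0}\frac{a_k}{n+k+1}\big)z^n$; equivalently $\mathcal{H}(f)(z)=\int_0^1 T_t(f)(z)\,dt$, where $T_t(f)(z)=\frac{1}{(t-1)z+1}f\!\left(\frac{t}{(t-1)z+1}\right)$ for $0<t<1$. *)

theory Defs
  imports "HOL-Analysis.Analysis"
begin

definition kor_norm :: "real \<Rightarrow> (complex \<Rightarrow> complex) \<Rightarrow> ereal" where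
  "kor_norm \<alpha> f = (SUP z\<in>ball 0 1. ereal ((1 - (cmod z)\<^sup>2) powr \<alpha> * cmod (f z)))"

definition korenblum :: "real \<Rightarrow> (complex \<Rightarrow> complex) set" where
  "korenblum \<alpha> = {f. f holomorphic_on ball 0 1 \<and> kor_norm \<alpha> f < \<infinity>}"

definition T_op :: "real \<Rightarrow> (complex \<Rightarrow> complex) \<Rightarrow> complex \<Rightarrow> complex" where
  "T_op t f z = (1 / ((of_real t - 1) * z + 1)) * f (of_real t / ((of_real t - 1) * z + 1))"

text \<open>Hilbert matrix operator, in its integral form.\<close>
definition hilbert_op :: "(complex \<Rightarrow> complex) \<Rightarrow> complex \<Rightarrow> complex" where
  "hilbert_op f z = integral {0..1} (\<lambda>t. T_op t f z)"

definition hilbert_norm :: "real \<Rightarrow> ereal" where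
  "hilbert_norm \<alpha> = (SUP f\<in>{f\<in>korenblum \<alpha>. kor_norm \<alpha> f \<le> 1}. kor_norm \<alpha> (hilbert_op f))"

definition G_fun :: "real \<Rightarrow> real \<Rightarrow> real \<Rightarrow> real" where
  "G_fun \<alpha> t x = (1 - x) powr (2*\<alpha> - 1) *
     ((1 - \<bar>x / (1 - t)\<bar>\<^sup>2) / ((1 - x)\<^sup>2 - t\<^sup>2)) powr \<alpha>"

definition x0_fun :: "real \<Rightarrow> real \<Rightarrow> real" where
  "x0_fun \<alpha> t = (\<alpha> + 2*\<alpha>*t - t - sqrt (4*\<alpha>\<^sup>2*t - 2*\<alpha>*t + \<alpha>\<^sup>2 - 2*\<alpha> + 1)) / (2*\<alpha> - 1)"

end

theory Submission
  imports Defs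
begin

text \<open>
  For f in the unit ball of \<open>H\<^sup>\<infinity>\<^sub>\<alpha>\<close> one has \<open>|f(w)| \<le> (1 - |w|\<^sup>2)\<^sup>-\<^sup>\<alpha>\<close>. With \<open>x = (1 - t)|z|\<close>
  the denominator of \<open>T\<^sub>t f(z)\<close> has modulus at least \<open>1 - x\<close>, so
  \<open>(1 - |z|\<^sup>2)\<^sup>\<alpha> |T\<^sub>t f(z)| \<le> G\<^sub>t(x)\<close>. The logarithmic derivative of \<open>G\<^sub>t\<close> has the sign of
  the quadratic \<open>N\<^sub>t(x) = 1 - 2\<alpha>x + (2\<alpha> - 1)(x - t)\<^sup>2\<close>. If \<open>N\<^sub>t(1 - t) \<ge> 0\<close>, which is the
  case for all t when \<open>\<alpha> \<le> 2/3\<close> and for \<open>t \<ge> (3\<alpha> - 2)/(4\<alpha> - 2)\<close> otherwise, then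
  \<open>N\<^sub>t \<ge> 0\<close> on \<open>[0, 1 - t]\<close> and \<open>G\<^sub>t\<close> is maximal at the endpoint, with value
  \<open>t\<^sup>\<alpha>\<^sup>-\<^sup>1 (1 - t)\<^sup>-\<^sup>\<alpha>\<close>; otherwise \<open>N\<^sub>t\<close> changes sign exactly once, at \<open>x\<^sub>0(t)\<close>, which is
  the maximum. Integrating the maximum over t bounds the norm.

  For the lower bound, \<open>f(z) = 2\<^sup>-\<^sup>\<alpha> (1 - z)\<^sup>-\<^sup>\<alpha>\<close> lies in the unit ball, and
  \<open>(1 - x\<^sup>2)\<^sup>\<alpha> |\<H>f(x)|\<close> increases, as \<open>x \<rightarrow> 1\<close>, to the Beta integral
  \<open>\<integral>\<^sub>0\<^sup>1 t\<^sup>\<alpha>\<^sup>-\<^sup>1 (1 - t)\<^sup>-\<^sup>\<alpha> dt = \<Gamma>(\<alpha>)\<Gamma>(1 - \<alpha>) = \<pi> / sin(\<alpha>\<pi>)\<close>.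
\<close>

section \<open>The majorant \<open>G\<^sub>t\<close> and its maximum\<close>

text \<open>\<open>phi a t\<close> is \<open>G\<^sub>t\<close> on \<open>[0, 1 - t)\<close>, extended continuously to \<open>x = 1 - t\<close>, where the formula of
  \<^const>\<open>G_fun\<close> degenerates to \<open>0 / 0 = 0\<close>.\<close>

definition phi :: "real \<Rightarrow> real \<Rightarrow> real \<Rightarrow> real" where
  "phi a t x = ((1 - t + x) / ((1 - t)\<^sup>2 * (1 + t - x))) powr a * (1 - x) powr (2*a - 1)"

lemma G_fun_eq_phi:
  assumes "0 < t" "t < 1" "0 \<le> x" "x < 1 - t"
  shows "G_fun a t x = phi a t x"
proof -
  have "1 - (x / s)\<^sup>2 = (s - x) * (s + x) / s\<^sup>2" if "s \<noteq> 0" for s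
    using that by (simp add: field_simps power2_eq_square)
  from this[of "1 - t"] assms have "1 - \<bar>x / (1 - t)\<bar>\<^sup>2 = (1 - t - x) * (1 - t + x) / (1 - t)\<^sup>2"
    by simp
  moreover have "(1 - x)\<^sup>2 - t\<^sup>2 = (1 - t - x) * (1 + t - x)"
    by (simp add: power2_eq_square algebra_simps)
  ultimately have "(1 - \<bar>x / (1 - t)\<bar>\<^sup>2) / ((1 - x)\<^sup>2 - t\<^sup>2)
      = ((1 - t - x) * (1 - t + x) / (1 - t)\<^sup>2) / ((1 - t - x) * (1 + t - x))"
    by simp
  also have "\<dots> = (1 - t + x) / ((1 - t)\<^sup>2 * (1 + t - x))"
    using assms by simp
  finally show ?thesis
    by (simp add: G_fun_def phi_def)
qed

definition psi :: "real \<Rightarrow> real \<Rightarrow> real \<Rightarrow> real" where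
  "psi a t x = a * ln (1 - t + x) - a * ln (1 + t - x) + (2*a - 1) * ln (1 - x)"

definition psi_numer :: "real \<Rightarrow> real \<Rightarrow> real \<Rightarrow> real" where
  "psi_numer a t x = 1 - 2*a*x + (2*a - 1) * (x - t)\<^sup>2"

lemma phi_eq_exp_psi:
  assumes "0 < t" "t < 1" "0 \<le> x" "x < 1"
  shows "phi a t x = exp (psi a t x - 2*a*ln (1 - t))"
proof -
  have pos: "1 - t + x > 0" "1 + t - x > 0" "1 - x > 0" "1 - t > 0"
    using assms by auto
  define R where "R = (1 - t + x) / ((1 - t)\<^sup>2 * (1 + t - x))"
  have "R > 0"
    using pos by (simp add: R_def)
  have "ln R = ln (1 - t + x) - 2 * ln (1 - t) - ln (1 + t - x)"
    using pos by (simp add: R_def ln_div ln_mult ln_realpow)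
  then have "phi a t x = exp (a * (ln (1 - t + x) - 2 * ln (1 - t) - ln (1 + t - x))) * exp ((2*a - 1) * ln (1 - x))"
    using pos \<open>R > 0\<close> by (simp add: phi_def R_def[symmetric] powr_def)
  then show ?thesis
    by (simp add: psi_def exp_add[symmetric] algebra_simps)
qed

lemma has_real_derivative_psi:
  assumes "0 < t" "t < 1" "0 \<le> u" "u < 1"
  shows "(psi a t has_real_derivative psi_numer a t u / ((1 - t + u) * (1 + t - u) * (1 - u))) (at u)"
proof -
  have pos: "1 - t + u > 0" "1 + t - u > 0" "1 - u > 0"
    using assms by auto
  have "psi_numer a t u
      = a * (1 + t - u) * (1 - u) + a * (1 - t + u) * (1 - u) - (2*a - 1) * (1 - t + u) * (1 + t - u)"
    by (simp add: psi_numer_def power2_eq_square algebra_simps)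
  moreover have "a / p + a / q - (2*a - 1) / r = (a * q * r + a * p * r - (2*a - 1) * p * q) / (p * q * r)"
    if "p \<noteq> 0" "q \<noteq> 0" "r \<noteq> 0" for p q r :: real
    using that by (simp add: field_simps)
  ultimately have "a / (1 - t + u) + a / (1 + t - u) - (2*a - 1) / (1 - u)
      = psi_numer a t u / ((1 - t + u) * (1 + t - u) * (1 - u))"
    using pos by (simp add: mult.assoc)
  moreover have "(psi a t has_real_derivative a / (1 - t + u) + a / (1 + t - u) - (2*a - 1) / (1 - u)) (at u)"
    unfolding psi_def[abs_def] using pos by (auto intro!: derivative_eq_intros)
  ultimately show ?thesis by simp
qed

lemma phi_mono_on:
  assumes "0 < t" "t < 1" "0 \<le> x" "x \<le> y" "y < 1"
    and "\<And>u. x \<le> u \<Longrightarrow> u \<le> y \<Longrightarrow> psi_numer a t u \<ge> 0"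
  shows "phi a t x \<le> phi a t y"
proof -
  have "psi a t x \<le> psi a t y"
  proof (rule DERIV_nonneg_imp_increasing_open[OF \<open>x \<le> y\<close>])
    fix u assume "x < u" "u < y"
    with assms show "\<exists>d. (psi a t has_real_derivative d) (at u) \<and> 0 \<le> d"
      by (intro exI[of _ "psi_numer a t u / ((1 - t + u) * (1 + t - u) * (1 - u))"] conjI
          has_real_derivative_psi divide_nonneg_pos) auto
  next
    show "continuous_on {x..y} (psi a t)"
      unfolding psi_def using assms by (intro continuous_intros) auto
  qed
  then show ?thesis
    using assms by (simp add: phi_eq_exp_psi)
qed

lemma phi_antimono_on:
  assumes "0 < t" "t < 1" "0 \<le> x" "x \<le> y" "y < 1"
    and "\<And>u. x \<le> u \<Longrightarrow> u \<le> y \<Longrightarrow> psi_numer a t u \<le> 0"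
  shows "phi a t y \<le> phi a t x"
proof -
  have "psi a t y \<le> psi a t x"
  proof (rule DERIV_nonpos_imp_decreasing_open[OF \<open>x \<le> y\<close>])
    fix u assume "x < u" "u < y"
    with assms show "\<exists>d. (psi a t has_real_derivative d) (at u) \<and> d \<le> 0"
      by (intro exI[of _ "psi_numer a t u / ((1 - t + u) * (1 + t - u) * (1 - u))"] conjI
          has_real_derivative_psi divide_nonpos_pos) auto
  next
    show "continuous_on {x..y} (psi a t)"
      unfolding psi_def using assms by (intro continuous_intros) auto
  qed
  then show ?thesis
    using assms by (simp add: phi_eq_exp_psi)
qed

lemma phi_one_minus:
  assumes "0 < t" "t < 1"
  shows "phi a t (1 - t) = t powr (a - 1) * (1 - t) powr (-a)"
proof -
  have "(s + s) / (s\<^sup>2 * (2 * t)) = 1 / (s * t)" if "s \<noteq> 0" for s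
    using that assms by (simp add: field_simps power2_eq_square)
  from this[of "1 - t"] assms
  have "(1 - t + (1 - t)) / ((1 - t)\<^sup>2 * (1 + t - (1 - t))) = 1 / ((1 - t) * t)"
    by simp
  then have "phi a t (1 - t) = (1 - t) powr (-a) * (t powr (-a) * t powr (2*a - 1))"
    using assms by (simp add: phi_def powr_divide powr_mult powr_minus_divide)
  also have "t powr (-a) * t powr (2*a - 1) = t powr (a - 1)"
    by (simp add: powr_add[symmetric])
  finally show ?thesis by simp
qed

lemma psi_numer_one_minus: "psi_numer a t (1 - t) = t * (4 - 6*a + (8*a - 4) * t)"
  by (simp add: psi_numer_def power2_eq_square algebra_simps)

lemma psi_numer_one_minus_nonneg_iff:
  assumes "0 < a" "0 < t" "t < 1"
  shows "psi_numer a t (1 - t) \<ge> 0 \<longleftrightarrow> a \<le> 2/3 \<or> (3*a - 2) / (4*a - 2) \<le> t"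
proof -
  have "psi_numer a t (1 - t) \<ge> 0 \<longleftrightarrow> 4 - 6*a + (8*a - 4) * t \<ge> 0"
    using assms by (simp add: psi_numer_one_minus zero_le_mult_iff)
  also have "\<dots> \<longleftrightarrow> a \<le> 2/3 \<or> (3*a - 2) / (4*a - 2) \<le> t"
  proof (cases "a \<le> 2/3")
    case True
    have "(8*a - 4) * t \<ge> min 0 (8*a - 4)"
      using assms by (cases "8*a - 4 \<ge> 0") (auto simp: mult_le_cancel_right1)
    with True assms show ?thesis by linarith
  next
    case False
    then show ?thesis by (simp add: divide_le_eq algebra_simps) arith
  qed
  finally show ?thesis .
qed

lemma psi_numer_one_minus_neg:
  assumes "2/3 < a" "0 < t" "t < (3*a - 2) / (4*a - 2)"
  shows "psi_numer a t (1 - t) < 0"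
proof -
  have "(3*a - 2) / (4*a - 2) < 1"
    using assms by (simp add: divide_less_eq)
  with assms psi_numer_one_minus_nonneg_iff[of a t] show ?thesis
    by auto
qed

lemma psi_numer_nonneg:
  assumes "0 < a" "a < 1" "0 < t" "t < 1" "psi_numer a t (1 - t) \<ge> 0" "0 \<le> u" "u \<le> 1 - t"
  shows "psi_numer a t u \<ge> 0"
proof (cases "a \<ge> 1/2")
  case True
  have diff: "psi_numer a t u - psi_numer a t (1 - t) = (1 - t - u) * (2*a - (2*a - 1) * (u + 1 - 3*t))"
    by (simp add: psi_numer_def power2_eq_square algebra_simps)
  have "(2*a - 1) * (u + 1 - 3*t) \<le> (2*a - 1) * 2"
    using True assms by (intro mult_left_mono) auto
  then have "psi_numer a t u - psi_numer a t (1 - t) \<ge> 0"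
    unfolding diff using assms by (intro mult_nonneg_nonneg) auto
  with assms show ?thesis by linarith
next
  case False
  have "\<bar>u - t\<bar> \<le> 1"
    using assms by (simp add: abs_le_iff)
  then have "(u - t)\<^sup>2 \<le> \<bar>u - t\<bar>"
    by (metis abs_ge_zero abs_mult_self_eq mult_left_le power2_eq_square)
  also have "\<dots> \<le> max u t"
    using assms by (auto simp: abs_if max_def)
  finally have "(1 - 2*a) * (u - t)\<^sup>2 \<le> (1 - 2*a) * max u t"
    using False by (intro mult_left_mono) auto
  moreover have "a * u \<le> a * max u t"
    using assms by (intro mult_left_mono) auto
  moreover have "psi_numer a t u = 1 - 2*a*u - (1 - 2*a) * (u - t)\<^sup>2"
    by (simp add: psi_numer_def algebra_simps)
  moreover have "(1 - 2*a) * max u t = max u t - 2 * (a * max u t)" "max u t \<le> 1"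
    using assms by (auto simp: algebra_simps)
  ultimately show ?thesis
    by linarith
qed

lemma psi_numer_factor:
  assumes "1/2 < a" "0 \<le> t"
  shows "psi_numer a t u
    = ((2*a - 1) * u - (a + (2*a - 1) * t) - sqrt (4*a\<^sup>2*t - 2*a*t + a\<^sup>2 - 2*a + 1)) * (u - x0_fun a t)"
proof -
  define A where "A = a + (2*a - 1) * t"
  define q where "q = sqrt (4*a\<^sup>2*t - 2*a*t + a\<^sup>2 - 2*a + 1)"
  have "4*a\<^sup>2*t - 2*a*t + a\<^sup>2 - 2*a + 1 = (a - 1)\<^sup>2 + 2*t*a*(2*a - 1)"
    by (simp add: power2_eq_square algebra_simps)
  also have "\<dots> \<ge> 0"
    using assms by (intro add_nonneg_nonneg mult_nonneg_nonneg) auto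
  finally have q2: "q\<^sup>2 = 4*a\<^sup>2*t - 2*a*t + a\<^sup>2 - 2*a + 1"
    by (simp add: q_def)
  have x0: "(2*a - 1) * (u - x0_fun a t) = (2*a - 1) * u - A + q"
    using assms by (simp add: x0_fun_def A_def q_def field_simps)
  have "((2*a - 1) * u - A - q) * (u - x0_fun a t) * (2*a - 1)
      = ((2*a - 1) * u - A - q) * ((2*a - 1) * (u - x0_fun a t))"
    by (simp only: mult_ac)
  also have "\<dots> = ((2*a - 1) * u - A)\<^sup>2 - q\<^sup>2"
    unfolding x0 by (simp add: power2_eq_square algebra_simps)
  also have "\<dots> = psi_numer a t u * (2*a - 1)"
    unfolding q2 A_def psi_numer_def by (simp add: power2_eq_square algebra_simps)
  finally show ?thesis
    using assms by (simp add: A_def q_def)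
qed

lemma psi_numer_sign_change:
  assumes "1/2 < a" "0 < t" "psi_numer a t (1 - t) < 0"
  shows "0 < x0_fun a t" "x0_fun a t < 1 - t"
    and "\<And>u. u \<le> x0_fun a t \<Longrightarrow> psi_numer a t u \<ge> 0"
    and "\<And>u. x0_fun a t \<le> u \<Longrightarrow> u \<le> 1 \<Longrightarrow> psi_numer a t u \<le> 0"
proof -
  define q where "q = sqrt (4*a\<^sup>2*t - 2*a*t + a\<^sup>2 - 2*a + 1)"
  have "(a - 1)\<^sup>2 \<le> 4*a\<^sup>2*t - 2*a*t + a\<^sup>2 - 2*a + 1"
    using assms by (simp add: power2_eq_square algebra_simps)
  then have "a - 1 \<le> q"
    unfolding q_def by (rule real_le_rsqrt)
  moreover have "(2*a - 1) * u \<le> 2*a - 1" "(2*a - 1) * t > 0" if "u \<le> 1" for u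
    using assms that by (auto intro: mult_left_le)
  ultimately have neg: "(2*a - 1) * u - (a + (2*a - 1) * t) - q < 0" if "u \<le> 1" for u
    using that by fastforce
  note factor = psi_numer_factor[OF assms(1) less_imp_le[OF assms(2)], folded q_def]
  have "psi_numer a t 0 > 0"
    using assms by (simp add: psi_numer_def add_pos_nonneg)
  show "0 < x0_fun a t"
  proof (rule ccontr)
    assume "\<not> 0 < x0_fun a t"
    then have "psi_numer a t 0 \<le> 0"
      unfolding factor using neg[of 0] by (intro mult_nonpos_nonneg) auto
    with \<open>psi_numer a t 0 > 0\<close> show False by simp
  qed
  show "x0_fun a t < 1 - t"
  proof (rule ccontr)
    assume "\<not> x0_fun a t < 1 - t"
    then have "psi_numer a t (1 - t) \<ge> 0"
      unfolding factor using neg[of "1 - t"] assms by (intro mult_nonpos_nonpos) auto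
    with assms show False by simp
  qed
  show "psi_numer a t u \<ge> 0" if "u \<le> x0_fun a t" for u
    using neg[of u] that \<open>x0_fun a t < 1 - t\<close> assms unfolding factor
    by (intro mult_nonpos_nonpos) auto
  show "psi_numer a t u \<le> 0" if "x0_fun a t \<le> u" "u \<le> 1" for u
    using neg[of u] that unfolding factor by (intro mult_nonpos_nonneg) auto
qed

definition phi_max :: "real \<Rightarrow> real \<Rightarrow> real" where
  "phi_max a t = (if psi_numer a t (1 - t) \<ge> 0 then t powr (a - 1) * (1 - t) powr (-a)
                  else G_fun a t (x0_fun a t))"

lemma phi_le_phi_max:
  assumes "0 < a" "a < 1" "0 < t" "t < 1" "0 \<le> x" "x \<le> 1 - t"
  shows "phi a t x \<le> phi_max a t"
proof (cases "psi_numer a t (1 - t) \<ge> 0")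
  case True
  have "phi a t x \<le> phi a t (1 - t)"
  proof (rule phi_mono_on)
    show "psi_numer a t u \<ge> 0" if "x \<le> u" "u \<le> 1 - t" for u
      using psi_numer_nonneg[OF assms(1-4) True] that assms(5) by simp
  qed (use assms in auto)
  with True assms show ?thesis
    by (simp add: phi_max_def phi_one_minus)
next
  case False
  then have "a > 1/2"
    using psi_numer_one_minus_nonneg_iff[OF assms(1,3,4)] by auto
  with False assms(3) have x0: "0 < x0_fun a t" "x0_fun a t < 1 - t"
    and up: "\<And>u. u \<le> x0_fun a t \<Longrightarrow> psi_numer a t u \<ge> 0"
    and down: "\<And>u. x0_fun a t \<le> u \<Longrightarrow> u \<le> 1 \<Longrightarrow> psi_numer a t u \<le> 0"
    using psi_numer_sign_change by auto
  have "phi a t x \<le> phi a t (x0_fun a t)"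
  proof (cases "x \<le> x0_fun a t")
    case True
    show ?thesis
      by (rule phi_mono_on) (use True assms x0 up in auto)
  next
    case False
    show ?thesis
      by (rule phi_antimono_on) (use False assms x0 down in auto)
  qed
  also have "\<dots> = G_fun a t (x0_fun a t)"
    using assms x0 by (intro G_fun_eq_phi[symmetric]) auto
  finally show ?thesis
    using False by (simp add: phi_max_def)
qed

lemma phi_le_powr:
  assumes "1/2 \<le> a" "0 < t" "t < 1" "0 \<le> x" "x \<le> 1 - t"
  shows "phi a t x \<le> t powr (-a) * (1 - t) powr (-a)"
proof -
  have "(1 - t) * (1 + t - x) - (1 - t + x) * t = 1 - t - x"
    by (simp add: algebra_simps)
  then have "(1 - t + x) * t \<le> (1 - t) * (1 + t - x)"
    using assms by linarith
  moreover have le: "p / (s\<^sup>2 * q) \<le> 1 / (s * t)" if "p * t \<le> s * q" "0 < s" "0 < q" for p s q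
    using that assms by (simp add: field_simps power2_eq_square)
  ultimately have "(1 - t + x) / ((1 - t)\<^sup>2 * (1 + t - x)) \<le> 1 / ((1 - t) * t)"
    using assms by (intro le) auto
  then have "((1 - t + x) / ((1 - t)\<^sup>2 * (1 + t - x))) powr a \<le> (1 / ((1 - t) * t)) powr a"
    using assms by (intro powr_mono2) auto
  also have "\<dots> = t powr (-a) * (1 - t) powr (-a)"
    by (simp add: powr_divide powr_mult powr_minus_divide)
  finally have "((1 - t + x) / ((1 - t)\<^sup>2 * (1 + t - x))) powr a \<le> t powr (-a) * (1 - t) powr (-a)" .
  moreover have "(1 - x) powr (2*a - 1) \<le> 1"
    using assms powr_mono2[of "2*a - 1" "1 - x" 1] by simp
  ultimately have "phi a t x \<le> t powr (-a) * (1 - t) powr (-a) * 1"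
    unfolding phi_def by (intro mult_mono) auto
  then show ?thesis
    by simp
qed

section \<open>The upper bound\<close>

lemma phi_eq_weight_ratio:
  assumes "0 < t" "t < 1" "0 \<le> x" "x < 1 - t"
  shows "(1 - (x / (1 - t))\<^sup>2) powr a * (1 - (t / (1 - x))\<^sup>2) powr (-a) / (1 - x) = phi a t x"
proof -
  define R where "R = (1 - t + x) / ((1 - t)\<^sup>2 * (1 + t - x))"
  have sq_diff: "1 - (y / s)\<^sup>2 = (s - y) * (s + y) / s\<^sup>2" if "s \<noteq> 0" for s y :: real
    using that by (simp add: field_simps power2_eq_square)
  have A: "1 - (x / (1 - t))\<^sup>2 = (1 - t - x) * (1 - t + x) / (1 - t)\<^sup>2"
    using sq_diff[of "1 - t" x] assms by simp
  have B: "1 - (t / (1 - x))\<^sup>2 = (1 - t - x) * (1 + t - x) / (1 - x)\<^sup>2"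
    using sq_diff[of "1 - x" t] assms by (simp add: algebra_simps)
  have pos: "1 - t - x > 0" "1 - t + x > 0" "1 + t - x > 0" "1 - x > 0" "1 - t > 0"
    using assms by auto
  have ratio: "(k * m / S) / (k * n / P) = m / (S * n) * P" if "k \<noteq> 0" "n \<noteq> 0" "P \<noteq> 0" for k m n S P :: real
    using that by (simp add: field_simps)
  have "(1 - (x / (1 - t))\<^sup>2) powr a * (1 - (t / (1 - x))\<^sup>2) powr (-a)
      = ((1 - (x / (1 - t))\<^sup>2) / (1 - (t / (1 - x))\<^sup>2)) powr a"
    by (simp add: powr_minus_divide powr_divide)
  also have "\<dots> = (R * (1 - x)\<^sup>2) powr a"
    unfolding A B R_def using pos by (subst ratio) auto
  also have "\<dots> = R powr a * (1 - x) powr (2*a)"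
    using pos by (simp add: powr_mult powr_powr[symmetric])
  finally show ?thesis
    using pos by (simp add: phi_def R_def powr_diff)
qed

lemma norm_T_op_denom_ge:
  assumes "t \<le> 1"
  shows "1 - (1 - t) * cmod z \<le> cmod ((of_real t - 1) * z + 1)"
proof -
  have "(of_real t - 1) * z + 1 = 1 - of_real (1 - t) * z"
    by (simp add: algebra_simps)
  moreover have "cmod (of_real (1 - t) * z) = (1 - t) * cmod z"
    using assms by (simp add: norm_mult del: of_real_diff)
  ultimately show ?thesis
    using norm_triangle_ineq2[of 1 "of_real (1 - t) * z"] by simp
qed

lemma weighted_norm_le_kor_norm:
  assumes "cmod w < 1"
  shows "ereal ((1 - (cmod w)\<^sup>2) powr a * cmod (f w)) \<le> kor_norm a f"
  unfolding kor_norm_def using assms by (intro SUP_upper) simp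

lemma weighted_norm_T_op_le_phi:
  assumes "0 \<le> a" "0 < t" "t < 1" "cmod z < 1"
    and f: "\<And>w. cmod w < 1 \<Longrightarrow> (1 - (cmod w)\<^sup>2) powr a * cmod (f w) \<le> 1"
  shows "(1 - (cmod z)\<^sup>2) powr a * cmod (T_op t f z) \<le> phi a t ((1 - t) * cmod z)"
proof -
  define x where "x = (1 - t) * cmod z"
  define D where "D = (of_real t - 1) * z + 1"
  define w where "w = of_real t / D"
  have "(1 - t) * cmod z < 1 - t"
    using assms by simp
  then have x: "0 \<le> x" "x < 1 - t"
    using assms by (auto simp: x_def)
  have D: "1 - x \<le> cmod D"
    unfolding x_def D_def using assms by (intro norm_T_op_denom_ge) auto
  have w: "cmod w \<le> t / (1 - x)" "t / (1 - x) < 1"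
    using D x assms by (auto simp: w_def norm_divide frac_le)
  have "(cmod w)\<^sup>2 < 1"
    using w by (simp add: abs_square_less_1)
  then have "cmod (f w) \<le> (1 - (cmod w)\<^sup>2) powr (-a)"
    using f[of w] w by (simp add: powr_minus_divide pos_le_divide_eq mult.commute)
  also have "\<dots> \<le> (1 - (t / (1 - x))\<^sup>2) powr (-a)"
    using w x assms by (intro powr_mono2') (auto simp: abs_square_less_1 intro!: power_mono)
  finally have "cmod (f w) / cmod D \<le> (1 - (t / (1 - x))\<^sup>2) powr (-a) / (1 - x)"
    using D x assms by (intro frac_le) auto
  then have "cmod (T_op t f z) \<le> (1 - (t / (1 - x))\<^sup>2) powr (-a) / (1 - x)"
    by (simp add: T_op_def D_def[symmetric] w_def[symmetric] norm_divide)
  then have "(1 - (cmod z)\<^sup>2) powr a * cmod (T_op t f z)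
      \<le> (1 - (cmod z)\<^sup>2) powr a * ((1 - (t / (1 - x))\<^sup>2) powr (-a) / (1 - x))"
    by (rule mult_left_mono) simp
  also have "\<dots> = phi a t x"
    using phi_eq_weight_ratio[OF assms(2,3) x, of a] assms by (simp add: x_def)
  finally show ?thesis
    by (simp add: x_def)
qed

lemma continuous_on_T_op:
  assumes "f holomorphic_on ball 0 1" "cmod z < 1"
  shows "continuous_on {0<..<1} (\<lambda>t. T_op t f z)"
proof -
  have D: "t < cmod ((of_real t - 1) * z + 1)" if "t \<in> {0<..<1}" for t
  proof -
    have "(1 - t) * cmod z < 1 - t" "t \<le> 1"
      using assms that by auto
    with norm_T_op_denom_ge[of t z] show ?thesis
      by linarith
  qed
  then have nz: "(of_real t - 1) * z + 1 \<noteq> 0" if "t \<in> {0<..<1}" for t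
    using that by force
  have "(\<lambda>t. of_real t / ((of_real t - 1) * z + 1)) ` {0<..<1} \<subseteq> ball 0 1"
    using D by (auto simp: norm_divide divide_less_eq)
  then have "continuous_on {0<..<1} (\<lambda>t. f (of_real t / ((of_real t - 1) * z + 1)))"
    using nz by (intro continuous_on_compose2[OF holomorphic_on_imp_continuous_on[OF assms(1)]])
      (auto intro!: continuous_intros)
  then show ?thesis
    unfolding T_op_def using nz by (intro continuous_intros) auto
qed

lemma kor_norm_hilbert_op_le:
  assumes hol: "f holomorphic_on ball 0 1" and b: "(b has_integral I) {0<..<1}"
    and bound: "\<And>t z. 0 < t \<Longrightarrow> t < 1 \<Longrightarrow> cmod z < 1 \<Longrightarrow>
      (1 - (cmod z)\<^sup>2) powr a * cmod (T_op t f z) \<le> b t"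
  shows "kor_norm a (hilbert_op f) \<le> ereal I"
  unfolding kor_norm_def
proof (rule SUP_least)
  fix z :: complex assume "z \<in> ball 0 1"
  then have z: "cmod z < 1" by simp
  define c where "c = (1 - (cmod z)\<^sup>2) powr a"
  have "(cmod z)\<^sup>2 < 1"
    using z by (simp add: abs_square_less_1)
  then have "c > 0"
    by (simp add: c_def)
  have "cmod (integral {0<..<1} (\<lambda>t. T_op t f z)) \<le> I / c"
  proof (rule integral_norm_bound_integral')
    show "cmod (T_op t f z) \<le> b t / c" if "t \<in> {0<..<1}" for t
      using bound[of t z] that z \<open>c > 0\<close> by (simp add: c_def pos_le_divide_eq mult.commute)
    show "(\<lambda>t. T_op t f z) \<in> borel_measurable (lebesgue_on {0<..<1})"
      using continuous_on_T_op[OF hol z] by (rule continuous_imp_measurable_on_sets_lebesgue) simp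
    show "((\<lambda>t. b t / c) has_integral I / c) {0<..<1}"
      using b by (rule has_integral_divide)
  qed simp
  then have "c * cmod (hilbert_op f z) \<le> I"
    using \<open>c > 0\<close>
    by (simp add: hilbert_op_def integral_open_interval_real pos_le_divide_eq mult.commute)
  then show "ereal ((1 - (cmod z)\<^sup>2) powr a * cmod (hilbert_op f z)) \<le> ereal I"
    by (simp add: c_def)
qed

lemma hilbert_norm_le:
  assumes "0 < a" "a < 1" "(phi_max a has_integral I) {0<..<1}"
  shows "hilbert_norm a \<le> ereal I"
  unfolding hilbert_norm_def
proof (rule SUP_least)
  fix f assume "f \<in> {f \<in> korenblum a. kor_norm a f \<le> 1}"
  then have hol: "f holomorphic_on ball 0 1" and "kor_norm a f \<le> 1"
    by (auto simp: korenblum_def)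
  then have unit: "(1 - (cmod w)\<^sup>2) powr a * cmod (f w) \<le> 1" if "cmod w < 1" for w
    using order_trans[OF weighted_norm_le_kor_norm[OF that] \<open>kor_norm a f \<le> 1\<close>] by simp
  show "kor_norm a (hilbert_op f) \<le> ereal I"
  proof (rule kor_norm_hilbert_op_le[OF hol assms(3)])
    fix t :: real and z :: complex
    assume tz: "0 < t" "t < 1" "cmod z < 1"
    then have "phi a t ((1 - t) * cmod z) \<le> phi_max a t"
      using assms by (intro phi_le_phi_max) auto
    with weighted_norm_T_op_le_phi[of a t z f] unit tz assms
    show "(1 - (cmod z)\<^sup>2) powr a * cmod (T_op t f z) \<le> phi_max a t"
      by force
  qed
qed

lemma has_integral_beta_reflection:
  assumes "0 < a" "a < 1"
  shows "((\<lambda>t. t powr (a - 1) * (1 - t) powr (-a)) has_integral pi / sin (a * pi)) {0<..<1}"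
proof -
  have "complex_of_real (Gamma a * Gamma (1 - a)) = of_real (pi / sin (a * pi))"
    using Gamma_reflection_complex[of "of_real a"]
    by (simp add: Gamma_complex_of_real[symmetric] sin_of_real[symmetric] mult.commute)
  then have "Beta a (1 - a) = pi / sin (a * pi)"
    by (simp only: of_real_eq_iff) (simp add: Beta_def)
  with has_integral_Beta_real[of a "1 - a"] assms show ?thesis
    by (simp add: has_integral_Icc_iff_Ioo)
qed

lemma x0_fun_below_threshold:
  assumes "2/3 < a" "0 < t" "t < (3*a - 2) / (4*a - 2)"
  shows "0 < x0_fun a t" "x0_fun a t < 1 - t" "G_fun a t (x0_fun a t) = phi a t (x0_fun a t)"
proof -
  have "(3*a - 2) / (4*a - 2) < 1"
    using assms by (simp add: divide_less_eq)
  moreover note x0 = psi_numer_sign_change[OF _ \<open>0 < t\<close> psi_numer_one_minus_neg[OF assms]]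
  ultimately show "0 < x0_fun a t" "x0_fun a t < 1 - t" "G_fun a t (x0_fun a t) = phi a t (x0_fun a t)"
    using assms by (auto intro: G_fun_eq_phi)
qed

lemma continuous_on_G_x0:
  assumes "2/3 < a"
  shows "continuous_on {0<..<(3*a - 2) / (4*a - 2)} (\<lambda>t. G_fun a t (x0_fun a t))"
proof -
  define c where "c = (3*a - 2) / (4*a - 2)"
  have x0: "0 < x0_fun a t" "x0_fun a t < 1 - t" if "t \<in> {0<..<c}" for t
    using x0_fun_below_threshold[OF assms] that by (auto simp: c_def)
  have "c < 1"
    using assms by (simp add: c_def divide_less_eq)
  have "continuous_on {0<..<c} (x0_fun a)"
    unfolding x0_fun_def using assms by (intro continuous_intros) auto
  then have "continuous_on {0<..<c} (\<lambda>t. phi a t (x0_fun a t))"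
    unfolding phi_def using \<open>c < 1\<close>
    by (intro continuous_intros) (use x0 in \<open>fastforce simp: divide_simps\<close>)+
  then show ?thesis
    unfolding c_def by (rule continuous_on_eq) (simp add: x0_fun_below_threshold[OF assms])
qed

lemma G_x0_integrable:
  assumes "2/3 < a" "a < 1"
  shows "(\<lambda>t. G_fun a t (x0_fun a t)) integrable_on {0..(3*a - 2) / (4*a - 2)}"
proof -
  define c where "c = (3*a - 2) / (4*a - 2)"
  have "0 < c" "c < 1"
    using assms by (auto simp: c_def divide_less_eq)
  note x0 = x0_fun_below_threshold[OF assms(1), folded c_def]
  have "(\<lambda>t. G_fun a t (x0_fun a t)) \<in> borel_measurable (lebesgue_on {0<..<c})"
    using continuous_on_G_x0[OF assms(1), folded c_def]
    by (rule continuous_imp_measurable_on_sets_lebesgue) simp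
  moreover have "(\<lambda>t. t powr ((1 - a) - 1) * (1 - t) powr ((1 - a) - 1)) integrable_on {0..1}"
    using assms by (intro integrable_Beta') auto
  then have "(\<lambda>t. t powr (-a) * (1 - t) powr (-a)) integrable_on {0..1}"
    by simp
  then have "(\<lambda>t. t powr (-a) * (1 - t) powr (-a)) integrable_on {0..c}"
    by (rule integrable_on_subinterval) (use \<open>0 < c\<close> \<open>c < 1\<close> in auto)
  then have "(\<lambda>t. t powr (-a) * (1 - t) powr (-a)) integrable_on {0<..<c}"
    by (simp add: integrable_on_Icc_iff_Ioo)
  moreover have "norm (G_fun a t (x0_fun a t)) \<le> t powr (-a) * (1 - t) powr (-a)" if "t \<in> {0<..<c}" for t
  proof -
    have "0 \<le> G_fun a t (x0_fun a t)"
      by (simp add: G_fun_def)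
    with x0(3)[of t] that have "norm (G_fun a t (x0_fun a t)) = phi a t (x0_fun a t)"
      by simp
    also have "\<dots> \<le> t powr (-a) * (1 - t) powr (-a)"
      using x0[of t] that assms by (intro phi_le_powr) auto
    finally show ?thesis .
  qed
  ultimately have "(\<lambda>t. G_fun a t (x0_fun a t)) integrable_on {0<..<c}"
    by (rule measurable_bounded_by_integrable_imp_integrable) simp_all
  then show ?thesis
    by (simp add: c_def integrable_on_Icc_iff_Ioo)
qed

lemma has_integral_phi_max:
  assumes "2/3 < a" "a < 1"
  defines "c \<equiv> (3*a - 2) / (4*a - 2)"
  shows "(phi_max a has_integral
           integral {0..c} (\<lambda>t. G_fun a t (x0_fun a t))
         + integral {c..1} (\<lambda>t. t powr (a - 1) * (1 - t) powr (-a))) {0<..<1}"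
proof -
  have "0 < c" "c < 1"
    using assms by (auto simp: c_def divide_less_eq)
  have below: "phi_max a t = G_fun a t (x0_fun a t)" if "0 < t" "t < c" for t
    using psi_numer_one_minus_neg[OF assms(1) that[unfolded c_def]] by (simp add: phi_max_def)
  have above: "phi_max a t = t powr (a - 1) * (1 - t) powr (-a)" if "c \<le> t" "t < 1" for t
  proof -
    have "0 < t"
      using that \<open>0 < c\<close> by linarith
    with that assms show ?thesis
      by (simp add: phi_max_def psi_numer_one_minus_nonneg_iff c_def)
  qed
  have "((\<lambda>t. G_fun a t (x0_fun a t)) has_integral integral {0..c} (\<lambda>t. G_fun a t (x0_fun a t))) {0..c}"
    using G_x0_integrable[OF assms(1,2), folded c_def] by (rule integrable_integral)
  then have "((\<lambda>t. G_fun a t (x0_fun a t)) has_integral integral {0..c} (\<lambda>t. G_fun a t (x0_fun a t))) {0<..<c}"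
    by (simp add: has_integral_Icc_iff_Ioo)
  then have "(phi_max a has_integral integral {0..c} (\<lambda>t. G_fun a t (x0_fun a t))) {0..c}"
    unfolding has_integral_Icc_iff_Ioo
    by (rule has_integral_eq[rotated]) (simp add: below)
  moreover have "(\<lambda>t. t powr (a - 1) * (1 - t) powr (-a)) integrable_on {0..1}"
    using has_integral_beta_reflection[of a] assms
    unfolding has_integral_Icc_iff_Ioo[symmetric] by (auto simp: integrable_on_def)
  then have "(\<lambda>t. t powr (a - 1) * (1 - t) powr (-a)) integrable_on {c..1}"
    by (rule integrable_on_subinterval) (use \<open>0 < c\<close> in auto)
  then have "((\<lambda>t. t powr (a - 1) * (1 - t) powr (-a))
      has_integral integral {c..1} (\<lambda>t. t powr (a - 1) * (1 - t) powr (-a))) {c<..<1}"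
    unfolding has_integral_Icc_iff_Ioo[symmetric] by (rule integrable_integral)
  then have "(phi_max a has_integral integral {c..1} (\<lambda>t. t powr (a - 1) * (1 - t) powr (-a))) {c..1}"
    unfolding has_integral_Icc_iff_Ioo
    by (rule has_integral_eq[rotated]) (simp add: above)
  ultimately show ?thesis
    unfolding has_integral_Icc_iff_Ioo[symmetric]
    using \<open>0 < c\<close> \<open>c < 1\<close> by (intro has_integral_combine) auto
qed

section \<open>The lower bound\<close>

definition test_fn :: "real \<Rightarrow> complex \<Rightarrow> complex" where
  "test_fn a z = of_real (2 powr (-a)) * (1 - z) powr (- of_real a)"

definition test_kernel :: "real \<Rightarrow> real \<Rightarrow> real \<Rightarrow> real" where
  "test_kernel a x t = ((1 + x) / 2) powr a * (1 - t) powr (-a) * (1 - (1 - t) * x) powr (a - 1)"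

lemma weighted_norm_test_fn_le_1:
  assumes "0 \<le> a" "cmod z < 1"
  shows "(1 - (cmod z)\<^sup>2) powr a * cmod (test_fn a z) \<le> 1"
proof -
  have "1 - (cmod z)\<^sup>2 = (1 - cmod z) * (1 + cmod z)"
    by (simp add: power2_eq_square algebra_simps)
  also have "\<dots> \<le> (1 - cmod z) * 2"
    using assms by (intro mult_left_mono) auto
  also have "\<dots> \<le> cmod (1 - z) * 2"
    using norm_triangle_ineq2[of 1 z] by simp
  finally have le: "1 - (cmod z)\<^sup>2 \<le> 2 * cmod (1 - z)"
    by simp
  have pos: "0 < 1 - (cmod z)\<^sup>2" "0 < cmod (1 - z)"
    using assms by (auto simp: abs_square_less_1)
  have "cmod (test_fn a z) = (2 * cmod (1 - z)) powr (-a)"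
    by (simp add: test_fn_def norm_mult norm_powr_real_powr' powr_mult)
  then have "(1 - (cmod z)\<^sup>2) powr a * cmod (test_fn a z) = ((1 - (cmod z)\<^sup>2) / (2 * cmod (1 - z))) powr a"
    by (simp add: powr_divide powr_minus_divide)
  also have "\<dots> \<le> 1 powr a"
    using le pos assms by (intro powr_mono2) (auto simp: divide_le_eq)
  finally show ?thesis
    by simp
qed

lemma test_fn_in_unit_ball:
  assumes "0 \<le> a"
  shows "test_fn a \<in> {f \<in> korenblum a. kor_norm a f \<le> 1}"
proof -
  have "1 - z \<notin> \<real>\<^sub>\<le>\<^sub>0" if "cmod z < 1" for z
    using that abs_Re_le_cmod[of z] by (auto simp: complex_nonpos_Reals_iff)
  then have "test_fn a holomorphic_on ball 0 1"
    unfolding test_fn_def by (intro holomorphic_intros) auto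
  moreover have "kor_norm a (test_fn a) \<le> 1"
    unfolding kor_norm_def using weighted_norm_test_fn_le_1[OF assms] by (intro SUP_least) simp
  ultimately show ?thesis
    by (auto simp: korenblum_def)
qed

lemma test_kernel_eq:
  assumes "0 \<le> x" "x < 1" "0 < t" "t < 1"
  shows "(1 - x\<^sup>2) powr a * (1 / (1 - (1 - t) * x) * 2 powr (-a)
           * ((1 - t) * (1 - x) / (1 - (1 - t) * x)) powr (-a)) = test_kernel a x t"
proof -
  define d where "d = 1 - (1 - t) * x"
  have "(1 - t) * x < 1 * 1"
    using assms by (intro mult_strict_mono') auto
  then have pos: "0 < d" "0 < 1 - t" "0 < 1 - x" "0 < 1 + x"
    using assms by (auto simp: d_def)
  have e0: "(1 - x\<^sup>2) powr a = (1 - x) powr a * (1 + x) powr a"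
    by (simp add: power2_eq_square algebra_simps flip: powr_mult)
  have e1: "((1 - t) * (1 - x) / d) powr (-a) = (1 - t) powr (-a) * (1 - x) powr (-a) * d powr a"
    using pos by (simp add: powr_divide powr_mult powr_minus_divide)
  have e2: "(1 - x) powr a * (1 - x) powr (-a) = 1"
    using pos by (simp flip: powr_add)
  have e3: "d powr (a - 1) = d powr a / d"
    using pos by (simp add: powr_diff)
  have e4: "((1 + x) / 2) powr a = (1 + x) powr a * 2 powr (-a)"
    by (simp add: powr_divide powr_minus_divide)
  have ring: "p * q * (1 / d * r * (s * p' * e)) = (p * p') * (q * r * s * (e / d))" for p q r s p' e :: real
    by (simp add: divide_inverse mult_ac)
  show ?thesis
    unfolding d_def[symmetric] test_kernel_def e0 e1 e3 e4 ring e2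
    by (simp add: mult_ac)
qed

lemma weighted_T_op_test_fn:
  assumes "0 \<le> x" "x < 1" "0 < t" "t < 1"
  shows "of_real ((1 - x\<^sup>2) powr a) * T_op t (test_fn a) (of_real x) = of_real (test_kernel a x t)"
proof -
  define d where "d = 1 - (1 - t) * x"
  have "(1 - t) * x < 1 * 1"
    using assms by (intro mult_strict_mono') auto
  then have "0 < d"
    by (simp add: d_def)
  have td: "1 - t / d = (1 - t) * (1 - x) / d"
    using \<open>0 < d\<close> by (simp add: d_def field_simps)
  then have "0 \<le> 1 - t / d"
    using assms \<open>0 < d\<close> by simp
  then have e1: "(of_real (1 - t / d) :: complex) powr (- of_real a) = of_real ((1 - t / d) powr (-a))"
    using powr_of_real[of "1 - t / d" "-a"] by simp
  have e2: "(of_real t - 1) * of_real x + 1 = (of_real d :: complex)"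
    by (simp add: d_def algebra_simps)
  have e3: "1 - of_real t / of_real d = (of_real (1 - t / d) :: complex)"
    by simp
  have "T_op t (test_fn a) (of_real x) = of_real (1 / d * 2 powr (-a) * (1 - t / d) powr (-a))"
    unfolding T_op_def test_fn_def e2 e3 e1 by simp
  then have "of_real ((1 - x\<^sup>2) powr a) * T_op t (test_fn a) (of_real x)
      = of_real ((1 - x\<^sup>2) powr a * (1 / d * 2 powr (-a) * ((1 - t) * (1 - x) / d) powr (-a)))"
    by (simp only: td of_real_mult)
  with test_kernel_eq[OF assms, of a] show ?thesis
    by (simp only: d_def)
qed

lemma test_kernel_nonneg: "test_kernel a x t \<ge> 0"
  unfolding test_kernel_def by simp

lemma test_kernel_mono:
  assumes "0 \<le> a" "a \<le> 1" "0 \<le> x" "x \<le> y" "y < 1" "0 < t" "t < 1"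
  shows "test_kernel a x t \<le> test_kernel a y t"
proof -
  have "(1 - t) * y < 1 * 1"
    using assms by (intro mult_strict_mono') auto
  moreover have "(1 - t) * x \<le> (1 - t) * y"
    using assms by (intro mult_left_mono) auto
  ultimately have "(1 - (1 - t) * x) powr (a - 1) \<le> (1 - (1 - t) * y) powr (a - 1)"
    using assms by (intro powr_mono2') auto
  moreover have "((1 + x) / 2) powr a \<le> ((1 + y) / 2) powr a"
    using assms by (intro powr_mono2) auto
  ultimately show ?thesis
    unfolding test_kernel_def by (intro mult_mono) auto
qed

lemma test_kernel_le:
  assumes "0 \<le> a" "a \<le> 1" "0 \<le> x" "x < 1" "0 < t" "t < 1"
  shows "test_kernel a x t \<le> t powr (a - 1) * (1 - t) powr (-a)"
proof -
  have "(1 - t) * x \<le> 1 - t"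
    using assms by (intro mult_left_le) auto
  then have "t \<le> 1 - (1 - t) * x"
    by linarith
  then have "(1 - (1 - t) * x) powr (a - 1) \<le> t powr (a - 1)"
    using assms by (intro powr_mono2') auto
  moreover have "((1 + x) / 2) powr a \<le> 1"
    using assms powr_mono2[of a "(1 + x) / 2" 1] by simp
  ultimately have "((1 + x) / 2) powr a * ((1 - (1 - t) * x) powr (a - 1) * (1 - t) powr (-a))
      \<le> 1 * (t powr (a - 1) * (1 - t) powr (-a))"
    by (intro mult_mono mult_right_mono) auto
  then show ?thesis
    by (simp add: test_kernel_def mult_ac)
qed

lemma test_kernel_integrable:
  assumes "0 < a" "a < 1" "0 \<le> x" "x < 1"
  shows "test_kernel a x integrable_on {0<..<1}"
proof (rule measurable_bounded_by_integrable_imp_integrable)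
  have "(1 - t) * x \<noteq> 1" if "0 < t" "t < 1" for t
    using that assms mult_strict_mono'[of "1 - t" 1 x 1] by simp
  then have "continuous_on {0<..<1} (test_kernel a x)"
    unfolding test_kernel_def using assms by (intro continuous_intros) auto
  then show "test_kernel a x \<in> borel_measurable (lebesgue_on {0<..<1})"
    by (rule continuous_imp_measurable_on_sets_lebesgue) simp
  show "(\<lambda>t. t powr (a - 1) * (1 - t) powr (-a)) integrable_on {0<..<1}"
    using has_integral_beta_reflection[OF assms(1,2)] by blast
  show "norm (test_kernel a x t) \<le> t powr (a - 1) * (1 - t) powr (-a)" if "t \<in> {0<..<1}" for t
    using test_kernel_le[of a x t] test_kernel_nonneg[of a x t] that assms by simp
qed simp

lemma weighted_hilbert_op_test_fn:
  assumes "0 < a" "a < 1" "0 \<le> x" "x < 1"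
  shows "(1 - x\<^sup>2) powr a * cmod (hilbert_op (test_fn a) (of_real x)) = integral {0<..<1} (test_kernel a x)"
proof -
  have "of_real ((1 - x\<^sup>2) powr a) * hilbert_op (test_fn a) (of_real x)
      = integral {0<..<1} (\<lambda>t. of_real ((1 - x\<^sup>2) powr a) * T_op t (test_fn a) (of_real x))"
    by (simp add: hilbert_op_def integral_open_interval_real)
  also have "\<dots> = integral {0<..<1} (\<lambda>t. of_real (test_kernel a x t))"
    using assms by (intro integral_cong weighted_T_op_test_fn) auto
  also have "\<dots> = of_real (integral {0<..<1} (test_kernel a x))"
    using has_integral_of_real[OF integrable_integral[OF test_kernel_integrable[OF assms]]]
    by (rule integral_unique)
  finally have "(1 - x\<^sup>2) powr a * cmod (hilbert_op (test_fn a) (of_real x))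
      = \<bar>integral {0<..<1} (test_kernel a x)\<bar>"
    by (metis norm_mult norm_of_real abs_of_nonneg powr_ge_zero)
  also have "\<dots> = integral {0<..<1} (test_kernel a x)"
    using test_kernel_integrable[OF assms] by (simp add: integral_nonneg test_kernel_nonneg)
  finally show ?thesis .
qed

lemma integral_test_kernel_tendsto:
  assumes "0 < a" "a < 1" "incseq xs" "\<And>n. 0 \<le> xs n" "\<And>n. xs n < 1" "xs \<longlonglongrightarrow> 1"
  shows "(\<lambda>n. integral {0<..<1} (test_kernel a (xs n))) \<longlonglongrightarrow> pi / sin (a * pi)"
proof -
  let ?g = "\<lambda>t. t powr (a - 1) * (1 - t) powr (-a)"
  have g: "(?g has_integral pi / sin (a * pi)) {0<..<1}"
    using has_integral_beta_reflection[OF assms(1,2)] .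
  have "?g integrable_on {0<..<1} \<and> (\<lambda>n. integral {0<..<1} (test_kernel a (xs n))) \<longlonglongrightarrow> integral {0<..<1} ?g"
  proof (rule monotone_convergence_increasing)
    show "test_kernel a (xs n) integrable_on {0<..<1}" for n
      using assms by (intro test_kernel_integrable) auto
    show "test_kernel a (xs n) t \<le> test_kernel a (xs (Suc n)) t" if "t \<in> {0<..<1}" for n t
      using assms that by (intro test_kernel_mono) (auto simp: incseq_Suc_iff)
    show "(\<lambda>n. test_kernel a (xs n) t) \<longlonglongrightarrow> ?g t" if "t \<in> {0<..<1}" for t
    proof -
      have "(\<lambda>n. test_kernel a (xs n) t) \<longlonglongrightarrow> test_kernel a 1 t"
        unfolding test_kernel_def using that by (intro tendsto_intros assms(6)) auto
      then show ?thesis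
        by (simp add: test_kernel_def mult.commute)
    qed
    have "\<bar>integral {0<..<1} (test_kernel a (xs n))\<bar> \<le> pi / sin (a * pi)" for n
    proof -
      have "0 \<le> integral {0<..<1} (test_kernel a (xs n))"
        using assms by (intro integral_nonneg test_kernel_integrable test_kernel_nonneg) auto
      moreover have "integral {0<..<1} (test_kernel a (xs n)) \<le> integral {0<..<1} ?g"
        using assms g by (intro integral_le test_kernel_integrable test_kernel_le) auto
      ultimately show ?thesis
        using g by (simp add: integral_unique)
    qed
    then show "bounded (range (\<lambda>n. integral {0<..<1} (test_kernel a (xs n))))"
      unfolding bounded_iff by (intro exI[of _ "pi / sin (a * pi)"]) simp
  qed
  with g show ?thesis
    by (simp add: integral_unique)
qed

lemma hilbert_norm_ge:
  assumes "0 < a" "a < 1"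
  shows "ereal (pi / sin (a * pi)) \<le> hilbert_norm a"
proof -
  define xs where "xs n = 1 - inverse (real (Suc n))" for n
  have xs: "0 \<le> xs n" "xs n < 1" for n
    by (simp_all add: xs_def inverse_le_1_iff)
  have "incseq xs"
    by (intro incseq_SucI) (simp add: xs_def field_simps)
  have "(\<lambda>n. inverse (real (Suc n))) \<longlonglongrightarrow> 0"
    by (rule LIMSEQ_inverse_real_of_nat)
  then have "xs \<longlonglongrightarrow> 1"
    unfolding xs_def using tendsto_diff[OF tendsto_const, of _ 0 sequentially 1] by simp
  have "ereal (integral {0<..<1} (test_kernel a (xs n))) \<le> hilbert_norm a" for n
  proof -
    have "ereal ((1 - (xs n)\<^sup>2) powr a * cmod (hilbert_op (test_fn a) (of_real (xs n))))
        \<le> kor_norm a (hilbert_op (test_fn a))"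
      using weighted_norm_le_kor_norm[of "of_real (xs n)"] xs by simp
    also have "\<dots> \<le> hilbert_norm a"
      unfolding hilbert_norm_def using test_fn_in_unit_ball assms by (intro SUP_upper) auto
    finally show ?thesis
      using weighted_hilbert_op_test_fn[OF assms xs] by simp
  qed
  with integral_test_kernel_tendsto[OF assms \<open>incseq xs\<close> xs \<open>xs \<longlonglongrightarrow> 1\<close>] show ?thesis
    by (intro LIMSEQ_le_const2[OF tendsto_ereal]) auto
qed

theorem mainTheorem3:
  fixes \<alpha> :: real
  shows "(0 < \<alpha> \<and> \<alpha> \<le> 2/3 \<longrightarrow> hilbert_norm \<alpha> = ereal (pi / sin (\<alpha> * pi)))
       \<and> (2/3 < \<alpha> \<and> \<alpha> < 1 \<longrightarrow>
           hilbert_norm \<alpha> \<le> ereal (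
             integral {0..(3*\<alpha> - 2)/(4*\<alpha> - 2)} (\<lambda>t. G_fun \<alpha> t (x0_fun \<alpha> t))
           + integral {(3*\<alpha> - 2)/(4*\<alpha> - 2)..1} (\<lambda>t. t powr (\<alpha> - 1) * (1 - t) powr (-\<alpha>))))"
proof (intro conjI impI)
  assume \<alpha>: "0 < \<alpha> \<and> \<alpha> \<le> 2/3"
  then have "(phi_max \<alpha> has_integral pi / sin (\<alpha> * pi)) {0<..<1}"
    by (intro has_integral_eq[OF _ has_integral_beta_reflection])
      (auto simp: phi_max_def psi_numer_one_minus_nonneg_iff)
  with \<alpha> have "hilbert_norm \<alpha> \<le> ereal (pi / sin (\<alpha> * pi))"
    by (intro hilbert_norm_le) auto
  with \<alpha> hilbert_norm_ge[of \<alpha>] show "hilbert_norm \<alpha> = ereal (pi / sin (\<alpha> * pi))"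
    by auto
next
  assume "2/3 < \<alpha> \<and> \<alpha> < 1"
  then show "hilbert_norm \<alpha> \<le> ereal (
             integral {0..(3*\<alpha> - 2)/(4*\<alpha> - 2)} (\<lambda>t. G_fun \<alpha> t (x0_fun \<alpha> t))
           + integral {(3*\<alpha> - 2)/(4*\<alpha> - 2)..1} (\<lambda>t. t powr (\<alpha> - 1) * (1 - t) powr (-\<alpha>)))"
    by (intro hilbert_norm_le has_integral_phi_max) auto
qed

end
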